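(* For every integer $n\ge 3$, the polytope $\operatorname{conv}\phi_3$ is affinely isomorphic to a face of the polytope $\operatorname{conv}\phi_n$.
   Context: For $n\ge 3$, $\phi_n$ is the set of $\binom{n}{2}\times\binom{n}{2}$ permutation matrices of the edges of the complete graph $K_n$ induced by permutations of its vertices: for a permutation $\sigma$ of $[n]$, the associated vector $\bm{z}\in\{0,1\}^{\binom{n}{2}\times\binom{n}{2}}$ has coordinates $z_{ijkl}$, $i,j,k,l\in[n]$, $i<j$, $k<l$, with $z_{ijkl}=1$ iff $\{\sigma(i),\sigma(j)\}=\{k,l\}$, and $0$ otherwise. Thus $\phi_n$ has $n!$ elements. *)

theory Defs
  imports "HOL-Analysis.Analysis" "HOL-Combinatorics.Permutations"
begin

text \<open>Vertices of K_n are the elements of a finite linearly ordered type 'n (n = CARD('n)).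
  Coordinates z_{ijkl} are indexed by ((i,j),(k,l)); only those with i<j, k<l are meaningful,
  all other coordinates are identically 0.\<close>

definition edge_perm_matrix :: "('n::{finite,linorder} \<Rightarrow> 'n) \<Rightarrow> real ^ (('n \<times> 'n) \<times> ('n \<times> 'n))" where
  "edge_perm_matrix \<sigma> = (\<chi> p. (case p of ((i,j),(k,l)) \<Rightarrow>
      if i < j \<and> k < l \<and> {\<sigma> i, \<sigma> j} = {k, l} then 1 else 0))"

definition phi :: "(real ^ (('n::{finite,linorder} \<times> 'n) \<times> ('n \<times> 'n))) set" where
  "phi = edge_perm_matrix ` {\<sigma>. \<sigma> permutes (UNIV :: 'n set)}"

definition affinely_isomorphic :: "'a::real_vector set \<Rightarrow> 'b::real_vector set \<Rightarrow> bool" where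
  "affinely_isomorphic P Q \<longleftrightarrow>
     (\<exists>g c. linear g \<and> bij_betw (\<lambda>x. g x + c) P Q)"

end

theory Submission
  imports Defs
begin

text \<open>Fix an order embedding \<open>h\<close> of the vertices of \<open>K\<^sub>3\<close> into those of \<open>K\<^sub>n\<close>. The linear
  functional counting the edges \<open>e\<close> with \<open>\<sigma> e - range h = e - range h\<close> is bounded by the number of
  edges, with equality exactly for the permutations fixing every vertex outside \<open>range h\<close>, i.e.\ the
  extensions of permutations of \<open>K\<^sub>3\<close>; so their matrices span a face. On the vertices of
  \<open>conv \<phi>\<^sub>3\<close> this extension agrees with an injective affine map: a vertex of \<open>K\<^sub>3\<close> is determined
  by its opposite edge, so the vertex permutation matrix is linear in the edge permutation matrix, and
  each entry of the extended edge matrix is either copied from the original one or an affine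
  expression in vertex entries.\<close>

lemma edge_perm_matrix_nth:
  "edge_perm_matrix \<sigma> $ ((i,j),(k,l)) = of_bool (i < j \<and> k < l \<and> {\<sigma> i, \<sigma> j} = {k,l})"
  by (simp add: edge_perm_matrix_def)

lemma edge_perm_matrix_row_sum:
  assumes "\<sigma> permutes UNIV" and "i < j"
  shows "(\<Sum>e\<in>UNIV. edge_perm_matrix \<sigma> $ ((i,j),e)) = 1"
proof -
  have "\<sigma> i \<noteq> \<sigma> j"
    using assms permutes_inj[OF assms(1)] by (auto simp: inj_eq)
  then have "edge_perm_matrix \<sigma> $ ((i,j),e) = of_bool (e = (min (\<sigma> i) (\<sigma> j), max (\<sigma> i) (\<sigma> j)))" for e
    using assms(2) by (cases e) (auto simp: edge_perm_matrix_nth doubleton_eq_iff min_def max_def)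
  then show ?thesis
    by simp
qed

lemma edge_perm_matrix_nth_eq_vertex_products:
  assumes "inj \<sigma>" and "i < j" and "k < l"
  shows "edge_perm_matrix \<sigma> $ ((i,j),(k,l)) =
    of_bool (\<sigma> i = k) * of_bool (\<sigma> j = l) + of_bool (\<sigma> i = l) * of_bool (\<sigma> j = k)"
proof -
  have "\<sigma> i \<noteq> \<sigma> j"
    using assms(1,2) by (auto simp: inj_eq)
  then show ?thesis
    using assms(2,3) by (auto simp: edge_perm_matrix_nth doubleton_eq_iff of_bool_def)
qed

lemma finite_phi: "finite phi"
  by (simp add: phi_def finite_permutations)

lemma convex_hull_phi_nth_eq_0:
  assumes "x \<in> convex hull phi" and "\<not> (i < j \<and> k < l)"
  shows "x $ ((i,j),(k,l)) = 0"
proof -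
  have "phi \<subseteq> {x. x $ ((i,j),(k,l)) = 0}"
    using assms(2) by (auto simp: phi_def edge_perm_matrix_nth)
  moreover have "convex {x :: real ^ (('a \<times> 'a) \<times> ('a \<times> 'a)). x $ ((i,j),(k,l)) = 0}"
    by (simp add: convex_def)
  ultimately show ?thesis
    using assms(1) hull_minimal by blast
qed

lemma exists_strict_mono_finite:
  assumes "CARD('m::{finite,linorder}) \<le> CARD('n::{finite,linorder})"
  shows "\<exists>h :: 'm \<Rightarrow> 'n. strict_mono h"
proof
  define ys where "ys = sorted_list_of_set (UNIV :: 'n set)"
  define rank where "rank x = card {y :: 'm. y < x}" for x
  have sorted: "sorted_wrt (<) ys"
    unfolding ys_def by (rule strict_sorted_list_of_set)
  have bound: "rank x < length ys" for x
  proof -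
    have "rank x < CARD('m)"
      unfolding rank_def by (rule psubset_card_mono) auto
    then show ?thesis using assms by (simp add: ys_def)
  qed
  show "strict_mono (\<lambda>x. ys ! rank x)"
  proof (rule strict_monoI)
    fix x x' :: 'm
    assume "x < x'"
    have "{y. y < x} \<subset> {y. y < x'}"
      using \<open>x < x'\<close> by (auto intro: less_trans)
    then have "rank x < rank x'"
      unfolding rank_def by (simp add: psubset_card_mono)
    then show "ys ! rank x < ys ! rank x'"
      using sorted_wrt_nth_less[OF sorted _ bound[of x']] by simp
  qed
qed

lemma face_of_convex_hull_eq_convex_hull_Int:
  fixes S :: "'a::euclidean_space set"
  assumes "compact S" and "F face_of convex hull S"
  shows "F = convex hull (S \<inter> F)"
proof -
  obtain S' where "S' \<subseteq> S" and F: "F = convex hull S'"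
    using face_of_convex_hull_subset[OF assms] by metis
  moreover have "S' \<subseteq> F"
    unfolding F by (rule hull_subset)
  ultimately have "S' \<subseteq> S \<inter> F" by blast
  then have "F \<subseteq> convex hull (S \<inter> F)" unfolding F by (rule hull_mono)
  moreover have "convex hull (S \<inter> F) \<subseteq> F"
    using face_of_imp_convex[OF assms(2)] by (intro hull_minimal) auto
  ultimately show ?thesis by blast
qed

lemma convex_hull_affine_image:
  assumes "linear g"
  shows "(\<lambda>x. g x + c) ` (convex hull S) = convex hull ((\<lambda>x. g x + c) ` S)"
proof -
  have "(\<lambda>x. g x + c) ` T = (\<lambda>x. c + x) ` g ` T" for T
    by (auto simp: image_image add.commute)
  then show ?thesis
    by (simp add: convex_hull_linear_image[OF assms] convex_hull_translation)
qed

definition extend_perm :: "('m \<Rightarrow> 'n) \<Rightarrow> ('m \<Rightarrow> 'm) \<Rightarrow> 'n \<Rightarrow> 'n" where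
  "extend_perm h \<tau> v = (if v \<in> range h then h (\<tau> (inv h v)) else v)"

lemma extend_perm_apply [simp]: "inj h \<Longrightarrow> extend_perm h \<tau> (h x) = h (\<tau> x)"
  by (simp add: extend_perm_def)

lemma extend_perm_outside [simp]: "v \<notin> range h \<Longrightarrow> extend_perm h \<tau> v = v"
  by (simp add: extend_perm_def)

lemma extend_perm_permutes:
  fixes h :: "'m \<Rightarrow> 'n::finite"
  assumes "inj h" and "\<tau> permutes UNIV"
  shows "extend_perm h \<tau> permutes UNIV"
proof -
  have "inj (extend_perm h \<tau>)"
  proof (rule injI)
    fix x y
    assume eq: "extend_perm h \<tau> x = extend_perm h \<tau> y"
    show "x = y"
    proof (cases "x \<in> range h"; cases "y \<in> range h")
      assume "x \<in> range h" "y \<in> range h"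
      then show ?thesis
        using eq assms permutes_inj[OF assms(2)] by (auto simp: inj_eq)
    qed (use eq in \<open>auto simp: extend_perm_def\<close>)
  qed
  then show ?thesis
    by (intro inj_imp_permutes) auto
qed

lemma extend_perm_image_Diff_range: "extend_perm h \<tau> ` A - range h = A - range h"
  by (force simp: extend_perm_def)

lemma extend_perm_if_preserves_pairs_outside_range:
  fixes h :: "'m::finite \<Rightarrow> 'n"
  assumes "inj h" and "CARD('m) \<ge> 2" and "\<sigma> permutes UNIV"
    and pairs: "\<And>i j. i \<noteq> j \<Longrightarrow> {\<sigma> i, \<sigma> j} - range h = {i,j} - range h"
  obtains \<tau> where "\<tau> permutes UNIV" and "\<sigma> = extend_perm h \<tau>"
proof -
  have maps_range: "\<sigma> (h x) \<in> range h" for x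
  proof -
    have "\<not> CARD('m) \<le> Suc 0"
      using assms(2) by simp
    then obtain y where "y \<noteq> x"
      using card_le_Suc0_iff_eq[OF finite_class.finite_UNIV] by (metis UNIV_I)
    then have "{\<sigma> (h x), \<sigma> (h y)} - range h = {}"
      using pairs[of "h x" "h y"] assms(1) by (auto simp: inj_eq)
    then show ?thesis by blast
  qed
  have fixes_outside: "\<sigma> v = v" if "v \<notin> range h" for v
  proof -
    obtain x :: 'm where True by blast
    have "{\<sigma> v, \<sigma> (h x)} - range h = {v}"
      using pairs[of v "h x"] that by auto
    then have "v \<in> {\<sigma> v, \<sigma> (h x)}"
      by blast
    then show ?thesis
      using maps_range[of x] that by auto
  qed
  define \<tau> where "\<tau> x = inv h (\<sigma> (h x))" for x
  have h_\<tau>: "h (\<tau> x) = \<sigma> (h x)" for x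
    unfolding \<tau>_def using maps_range by (simp add: f_inv_into_f)
  have "inj \<tau>"
    by (rule injI) (metis h_\<tau> assms(1,3) injD permutes_inj)
  then have "\<tau> permutes UNIV"
    by (intro inj_imp_permutes) auto
  moreover have "\<sigma> = extend_perm h \<tau>"
    by (rule ext) (metis assms(1) extend_perm_apply extend_perm_outside fixes_outside h_\<tau> rangeE)
  ultimately show ?thesis using that by blast
qed

lemma edge_perm_matrix_extend_perm_nth_image:
  assumes "strict_mono h"
  shows "edge_perm_matrix (extend_perm h \<tau>) $ ((h i, h j),(h k, h l)) = edge_perm_matrix \<tau> $ ((i,j),(k,l))"
proof -
  have "inj h"
    using assms strict_mono_imp_inj_on by blast
  then have "{h (\<tau> i), h (\<tau> j)} = {h k, h l} \<longleftrightarrow> {\<tau> i, \<tau> j} = {k, l}"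
    using inj_image_eq_iff[of h "{\<tau> i, \<tau> j}" "{k, l}"] by simp
  then show ?thesis
    using \<open>inj h\<close> assms by (simp add: edge_perm_matrix_nth strict_mono_less)
qed

definition face_normal :: "('m \<Rightarrow> 'n::{finite,linorder}) \<Rightarrow> real ^ (('n \<times> 'n) \<times> ('n \<times> 'n))" where
  "face_normal h = (\<chi> p. case p of ((i,j),(k,l)) \<Rightarrow>
      of_bool (i < j \<and> k < l \<and> {i,j} - range h = {k,l} - range h))"

lemma face_normal_inner_edge_perm_matrix:
  assumes "\<sigma> permutes UNIV"
  shows "face_normal h \<bullet> edge_perm_matrix \<sigma> =
    real (card {(i,j). i < j \<and> {\<sigma> i, \<sigma> j} - range h = {i,j} - range h})"
    (is "_ = real (card ?E)")
proof -
  have row: "(\<Sum>e'\<in>UNIV. face_normal h $ (e,e') * edge_perm_matrix \<sigma> $ (e,e')) = of_bool (e \<in> ?E)" for e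
  proof -
    obtain i j where e: "e = (i,j)" by fastforce
    have "(\<Sum>e'\<in>UNIV. face_normal h $ (e,e') * edge_perm_matrix \<sigma> $ (e,e')) =
        (\<Sum>e'\<in>UNIV. of_bool (e \<in> ?E) * edge_perm_matrix \<sigma> $ (e,e'))"
      by (rule sum.cong) (auto simp: e face_normal_def edge_perm_matrix_nth split: prod.split)
    also have "\<dots> = of_bool (e \<in> ?E) * (\<Sum>e'\<in>UNIV. edge_perm_matrix \<sigma> $ ((i,j),e'))"
      by (simp add: e sum_distrib_left)
    also have "\<dots> = of_bool (e \<in> ?E)"
      using edge_perm_matrix_row_sum[OF assms, of i j] by (auto simp: e)
    finally show ?thesis .
  qed
  have "face_normal h \<bullet> edge_perm_matrix \<sigma> =
      (\<Sum>e\<in>UNIV. \<Sum>e'\<in>UNIV. face_normal h $ (e,e') * edge_perm_matrix \<sigma> $ (e,e'))"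
    by (simp add: inner_vec_def sum.cartesian_product UNIV_Times_UNIV[symmetric] del: UNIV_Times_UNIV)
  also have "\<dots> = real (card ?E)"
    by (simp add: row)
  finally show ?thesis .
qed

lemma face_normal_inner_edge_perm_matrix_le:
  fixes \<sigma> :: "'n::{finite,linorder} \<Rightarrow> 'n"
  assumes "\<sigma> permutes UNIV"
  shows "face_normal h \<bullet> edge_perm_matrix \<sigma> \<le> real (card {(i,j). i < (j :: 'n)})"
  unfolding face_normal_inner_edge_perm_matrix[OF assms] by (intro of_nat_mono card_mono) auto

lemma face_normal_inner_edge_perm_matrix_eq_iff:
  fixes \<sigma> :: "'n::{finite,linorder} \<Rightarrow> 'n"
  assumes "\<sigma> permutes UNIV"
  shows "face_normal h \<bullet> edge_perm_matrix \<sigma> = real (card {(i,j). i < (j :: 'n)})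
    \<longleftrightarrow> (\<forall>i j. i < j \<longrightarrow> {\<sigma> i, \<sigma> j} - range h = {i,j} - range h)"
proof -
  define E where "E = {(i,j). i < j \<and> {\<sigma> i, \<sigma> j} - range h = {i,j} - range h}"
  have "E \<subseteq> {(i,j). i < j}"
    by (auto simp: E_def)
  then have "card E = card {(i,j). i < (j :: 'n)} \<longleftrightarrow> E = {(i,j). i < j}"
    using card_subset_eq[of "{(i,j). i < (j :: 'n)}" E] by auto
  also have "\<dots> \<longleftrightarrow> (\<forall>i j. i < j \<longrightarrow> {\<sigma> i, \<sigma> j} - range h = {i,j} - range h)"
    unfolding E_def set_eq_iff by auto
  finally show ?thesis
    unfolding face_normal_inner_edge_perm_matrix[OF assms] E_def[symmetric] of_nat_eq_iff .
qed

lemma face_normal_inner_edge_perm_matrix_eq_iff_extend_perm: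
  fixes h :: "'m::finite \<Rightarrow> 'n::{finite,linorder}"
  assumes "inj h" and "CARD('m) \<ge> 2" and "\<sigma> permutes UNIV"
  shows "face_normal h \<bullet> edge_perm_matrix \<sigma> = real (card {(i,j). i < (j :: 'n)})
    \<longleftrightarrow> (\<exists>\<tau>. \<tau> permutes UNIV \<and> \<sigma> = extend_perm h \<tau>)"
  unfolding face_normal_inner_edge_perm_matrix_eq_iff[OF assms(3)]
proof
  assume ordered: "\<forall>i j. i < j \<longrightarrow> {\<sigma> i, \<sigma> j} - range h = {i,j} - range h"
  have unordered: "{\<sigma> i, \<sigma> j} - range h = {i,j} - range h" if "i \<noteq> j" for i j
  proof (cases "i < j")
    case True
    then show ?thesis
      using ordered by simp
  next
    case False
    with that have "j < i" by simp
    then have "{\<sigma> j, \<sigma> i} - range h = {j,i} - range h"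
      using ordered by simp
    then show ?thesis
      by (simp add: insert_commute)
  qed
  obtain \<tau> where "\<tau> permutes UNIV" "\<sigma> = extend_perm h \<tau>"
    using extend_perm_if_preserves_pairs_outside_range[OF assms unordered] by blast
  then show "\<exists>\<tau>. \<tau> permutes UNIV \<and> \<sigma> = extend_perm h \<tau>"
    by blast
next
  assume "\<exists>\<tau>. \<tau> permutes UNIV \<and> \<sigma> = extend_perm h \<tau>"
  then obtain \<tau> where "\<sigma> = extend_perm h \<tau>" by blast
  then have "{\<sigma> i, \<sigma> j} - range h = {i,j} - range h" for i j
    using extend_perm_image_Diff_range[of h \<tau> "{i,j}"] by simp
  then show "\<forall>i j. i < j \<longrightarrow> {\<sigma> i, \<sigma> j} - range h = {i,j} - range h"
    by blast
qed

lemma phi_subset_face_normal_halfspace: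
  "(phi :: (real ^ (('n::{finite,linorder} \<times> 'n) \<times> ('n \<times> 'n))) set)
    \<subseteq> {x. face_normal h \<bullet> x \<le> real (card {(i,j). i < (j :: 'n)})}"
  unfolding phi_def using face_normal_inner_edge_perm_matrix_le by blast

lemma Compl_singleton_eq_ordered_pair:
  fixes a :: "'m::{finite,linorder}"
  assumes "CARD('m) = 3"
  obtains u w where "u < w" and "- {a} = {u,w}"
proof -
  have "card (- {a}) = 2"
    using assms by (simp add: Compl_eq_Diff_UNIV card_Diff_singleton)
  then obtain x y where xy: "- {a} = {x,y}" "x \<noteq> y"
    by (meson card_2_iff)
  show ?thesis
  proof (cases "x < y")
    case True
    then show ?thesis using xy that by blast
  next
    case False
    then have "y < x" using xy(2) by simp
    then show ?thesis using xy that by (metis insert_commute)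
  qed
qed

lemma ordered_pair_avoiding_iff:
  fixes u :: "'a::linorder"
  assumes "u < w" and "- {a} = {u,w}"
  shows "i < j \<and> a \<notin> {i,j} \<longleftrightarrow> i = u \<and> j = w"
proof
  assume ij: "i < j \<and> a \<notin> {i,j}"
  then have "i \<in> {u,w}" "j \<in> {u,w}"
    using assms(2) by (auto simp: set_eq_iff)
  then show "i = u \<and> j = w"
    using ij assms(1) by auto
qed (use assms in \<open>auto simp: set_eq_iff\<close>)

text \<open>In \<open>K\<^sub>3\<close> the only edge avoiding \<open>a\<close> is the one opposite to \<open>a\<close>, so on the matrix of \<open>\<tau>\<close> this
  picks a single entry, which is \<open>1\<close> iff \<open>\<tau> a = b\<close>.\<close>

definition vertex_entry :: "real ^ (('m::{finite,linorder} \<times> 'm) \<times> ('m \<times> 'm)) \<Rightarrow> 'm \<Rightarrow> 'm \<Rightarrow> real" where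
  "vertex_entry z a b = (\<chi> p. case p of ((i,j),(k,l)) \<Rightarrow>
      of_bool (i < j \<and> k < l \<and> a \<notin> {i,j} \<and> b \<notin> {k,l})) \<bullet> z"

lemma vertex_entry_eq_nth:
  fixes a :: "'m::{finite,linorder}"
  assumes "u < w" and "- {a} = {u,w}" and "k < l" and "- {b} = {k,l}"
  shows "vertex_entry z a b = z $ ((u,w),(k,l))"
proof -
  have indicator: "(\<chi> p. case p of ((i,j),(k',l')) \<Rightarrow> of_bool (i < j \<and> k' < l' \<and> a \<notin> {i,j} \<and> b \<notin> {k',l'}))
      = axis ((u,w),(k,l)) 1" (is "?indicator = _")
  proof (unfold vec_eq_iff, intro allI)
    fix p :: "('m \<times> 'm) \<times> ('m \<times> 'm)"
    obtain i j k' l' where p: "p = ((i,j),(k',l'))"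
      by (metis prod.collapse)
    show "?indicator $ p = axis ((u,w),(k,l)) 1 $ p"
      using ordered_pair_avoiding_iff[OF assms(1,2), of i j] ordered_pair_avoiding_iff[OF assms(3,4), of k' l']
      by (auto simp: p axis_def)
  qed
  show ?thesis
    unfolding vertex_entry_def indicator by (simp add: inner_axis')
qed

lemma vertex_entry_edge_perm_matrix:
  assumes "CARD('m::{finite,linorder}) = 3" and "\<tau> permutes (UNIV :: 'm set)"
  shows "vertex_entry (edge_perm_matrix \<tau>) a b = of_bool (\<tau> a = b)"
proof -
  obtain u w where uw: "u < w" "- {a} = {u,w}"
    using Compl_singleton_eq_ordered_pair[OF assms(1)] by blast
  obtain k l where kl: "k < l" "- {b} = {k,l}"
    using Compl_singleton_eq_ordered_pair[OF assms(1)] by blast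
  have "{\<tau> u, \<tau> w} = - {\<tau> a}"
    using bij_image_Compl_eq[OF permutes_bij[OF assms(2)], of "{a}"] uw(2) by simp
  then show ?thesis
    using uw kl by (auto simp: vertex_entry_eq_nth edge_perm_matrix_nth)
qed

lemma vertex_entry_add: "vertex_entry (x + y) a b = vertex_entry x a b + vertex_entry y a b"
  by (simp add: vertex_entry_def inner_add_right)

lemma vertex_entry_scaleR: "vertex_entry (c *\<^sub>R x) a b = c * vertex_entry x a b"
  by (simp add: vertex_entry_def)

definition moved_entry :: "('m::{finite,linorder} \<Rightarrow> 'n) \<Rightarrow> real ^ (('m \<times> 'm) \<times> ('m \<times> 'm)) \<Rightarrow> 'n \<Rightarrow> 'n \<Rightarrow> real" where
  "moved_entry h z x y = (if x \<in> range h \<and> y \<in> range h then vertex_entry z (inv h x) (inv h y) else 0)"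

definition fixed_entry :: "('m \<Rightarrow> 'n) \<Rightarrow> 'n \<Rightarrow> 'n \<Rightarrow> real" where
  "fixed_entry h x y = of_bool (x \<notin> range h \<and> x = y)"

lemma moved_entry_add: "moved_entry h (x + y) a b = moved_entry h x a b + moved_entry h y a b"
  by (simp add: moved_entry_def vertex_entry_add)

lemma moved_entry_scaleR: "moved_entry h (c *\<^sub>R x) a b = c * moved_entry h x a b"
  by (simp add: moved_entry_def vertex_entry_scaleR)

lemma moved_plus_fixed_entry:
  assumes "CARD('m::{finite,linorder}) = 3" and "inj (h :: 'm \<Rightarrow> 'n)" and "\<tau> permutes UNIV"
  shows "moved_entry h (edge_perm_matrix \<tau>) x y + fixed_entry h x y = of_bool (extend_perm h \<tau> x = y)"
proof (cases "x \<in> range h")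
  case True
  then obtain x' where x: "x = h x'" by blast
  show ?thesis
  proof (cases "y \<in> range h")
    case True
    then obtain y' where "y = h y'" by blast
    then show ?thesis
      using x assms by (simp add: moved_entry_def fixed_entry_def vertex_entry_edge_perm_matrix inj_eq)
  next
    case False
    then show ?thesis
      using x assms(2) by (auto simp: moved_entry_def fixed_entry_def)
  qed
next
  case False
  then show ?thesis
    by (simp add: moved_entry_def fixed_entry_def)
qed

text \<open>\<open>moved_entry h z + fixed_entry h\<close> is the vertex permutation matrix \<open>P\<close> of the extension, and
  an edge entry is \<open>P i k * P j l + P i l * P j k\<close>. Products of two moved entries vanish unless all
  four vertices lie in \<open>range h\<close>, where the entry is copied from \<open>z\<close> instead; the remaining terms
  split into a linear part and a constant part.\<close>

definition embed_linear :: "('m::{finite,linorder} \<Rightarrow> 'n::{finite,linorder}) \<Rightarrow>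
    real ^ (('m \<times> 'm) \<times> ('m \<times> 'm)) \<Rightarrow> real ^ (('n \<times> 'n) \<times> ('n \<times> 'n))" where
  "embed_linear h z = (\<chi> p. case p of ((i,j),(k,l)) \<Rightarrow>
     if i < j \<and> k < l then
       if {i,j,k,l} \<subseteq> range h then z $ ((inv h i, inv h j),(inv h k, inv h l))
       else moved_entry h z i k * fixed_entry h j l + fixed_entry h i k * moved_entry h z j l
          + moved_entry h z i l * fixed_entry h j k + fixed_entry h i l * moved_entry h z j k
     else 0)"

definition embed_offset :: "('m \<Rightarrow> 'n::{finite,linorder}) \<Rightarrow> real ^ (('n \<times> 'n) \<times> ('n \<times> 'n))" where
  "embed_offset h = (\<chi> p. case p of ((i,j),(k,l)) \<Rightarrow>
     of_bool (i < j \<and> k < l \<and> \<not> {i,j,k,l} \<subseteq> range h) *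
       (fixed_entry h i k * fixed_entry h j l + fixed_entry h i l * fixed_entry h j k))"

lemma linear_embed_linear: "linear (embed_linear h)"
proof (rule linearI)
  show "embed_linear h (x + y) = embed_linear h x + embed_linear h y" for x y
    by (simp add: embed_linear_def vec_eq_iff moved_entry_add distrib_left distrib_right split: prod.split)
  show "embed_linear h (c *\<^sub>R x) = c *\<^sub>R embed_linear h x" for c x
    by (simp add: embed_linear_def vec_eq_iff moved_entry_scaleR distrib_left split: prod.split)
qed

lemma embed_edge_perm_matrix:
  assumes "CARD('m::{finite,linorder}) = 3" and "strict_mono (h :: 'm \<Rightarrow> 'n::{finite,linorder})"
    and "\<tau> permutes UNIV"
  shows "embed_linear h (edge_perm_matrix \<tau>) + embed_offset h = edge_perm_matrix (extend_perm h \<tau>)"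
proof (unfold vec_eq_iff, intro allI)
  fix p :: "('n \<times> 'n) \<times> ('n \<times> 'n)"
  obtain i j k l where p: "p = ((i,j),(k,l))"
    by (metis prod.collapse)
  have "inj h"
    using assms(2) strict_mono_imp_inj_on by blast
  define L where "L = moved_entry h (edge_perm_matrix \<tau>)"
  define K where "K = fixed_entry h"
  define \<sigma> where "\<sigma> = extend_perm h \<tau>"
  have "inj \<sigma>"
    unfolding \<sigma>_def using extend_perm_permutes[OF \<open>inj h\<close> assms(3)] permutes_inj by blast
  consider "\<not> (i < j \<and> k < l)" | (inside) "i < j" "k < l" "{i,j,k,l} \<subseteq> range h"
    | (outside) "i < j" "k < l" "\<not> {i,j,k,l} \<subseteq> range h"
    by blast
  then show "(embed_linear h (edge_perm_matrix \<tau>) + embed_offset h) $ p = edge_perm_matrix \<sigma> $ p"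
  proof cases
    case 1
    then show ?thesis
      by (auto simp: p embed_linear_def embed_offset_def edge_perm_matrix_nth)
  next
    case inside
    then obtain i' j' k' l' where "i = h i'" "j = h j'" "k = h k'" "l = h l'"
      by (metis insert_subset rangeE)
    then show ?thesis
      using inside \<open>inj h\<close> edge_perm_matrix_extend_perm_nth_image[OF assms(2)]
      by (simp add: p \<sigma>_def embed_linear_def embed_offset_def)
  next
    case outside
    have products: "L i k * L j l = 0" "L i l * L j k = 0"
      using outside by (auto simp: L_def moved_entry_def)
    have "(embed_linear h (edge_perm_matrix \<tau>) + embed_offset h) $ p =
        L i k * K j l + K i k * L j l + L i l * K j k + K i l * L j k + (K i k * K j l + K i l * K j k)"
      using outside by (auto simp: p embed_linear_def embed_offset_def L_def K_def)
    also have "\<dots> = (L i k + K i k) * (L j l + K j l) + (L i l + K i l) * (L j k + K j k)"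
      unfolding distrib_left distrib_right using products by linarith
    also have "\<dots> = edge_perm_matrix \<sigma> $ p"
      unfolding L_def K_def moved_plus_fixed_entry[OF assms(1) \<open>inj h\<close> assms(3)]
      using edge_perm_matrix_nth_eq_vertex_products[OF \<open>inj \<sigma>\<close> outside(1,2)]
      by (simp add: p \<sigma>_def)
    finally show ?thesis .
  qed
qed

lemma inj_on_embed_linear:
  assumes "strict_mono (h :: 'm::{finite,linorder} \<Rightarrow> 'n::{finite,linorder})"
  shows "inj_on (embed_linear h) (convex hull phi)"
proof (rule inj_onI)
  fix x y
  assume x: "x \<in> convex hull phi" and y: "y \<in> convex hull phi"
    and eq: "embed_linear h x = embed_linear h y"
  have "inj h"
    using assms strict_mono_imp_inj_on by blast
  show "x = y"
  proof (unfold vec_eq_iff, intro allI)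
    fix p :: "('m \<times> 'm) \<times> ('m \<times> 'm)"
    obtain i j k l where p: "p = ((i,j),(k,l))"
      by (metis prod.collapse)
    show "x $ p = y $ p"
    proof (cases "i < j \<and> k < l")
      case True
      then have "h i < h j" "h k < h l"
        using assms by (simp_all add: strict_mono_less)
      then show ?thesis
        using arg_cong[OF eq, of "\<lambda>v. v $ ((h i, h j),(h k, h l))"] \<open>inj h\<close>
        by (simp add: p embed_linear_def)
    next
      case False
      then show ?thesis
        using convex_hull_phi_nth_eq_0[OF x] convex_hull_phi_nth_eq_0[OF y] by (simp add: p)
    qed
  qed
qed

lemma phi_Int_face_normal_hyperplane:
  fixes h :: "'m::{finite,linorder} \<Rightarrow> 'n::{finite,linorder}"
  assumes "CARD('m) = 3" and "strict_mono h"
  shows "phi \<inter> {x. face_normal h \<bullet> x = real (card {(i,j). i < (j :: 'n)})}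
    = (\<lambda>z. embed_linear h z + embed_offset h) ` phi"
proof -
  have "inj h"
    using assms(2) strict_mono_imp_inj_on by blast
  have "phi \<inter> {x. face_normal h \<bullet> x = real (card {(i,j). i < (j :: 'n)})}
      = edge_perm_matrix ` extend_perm h ` {\<tau>. \<tau> permutes UNIV}"
    unfolding phi_def
    using face_normal_inner_edge_perm_matrix_eq_iff_extend_perm[OF \<open>inj h\<close>] assms(1)
      extend_perm_permutes[OF \<open>inj h\<close>]
    by auto
  also have "\<dots> = (\<lambda>z. embed_linear h z + embed_offset h) ` phi"
    unfolding phi_def image_image using embed_edge_perm_matrix[OF assms] by simp
  finally show ?thesis .
qed

theorem lemma1:
  assumes "CARD('m::{finite,linorder}) = 3"
    and "CARD('n::{finite,linorder}) \<ge> 3"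
  shows "\<exists>F. F face_of convex hull (phi :: (real ^ (('n \<times> 'n) \<times> ('n \<times> 'n))) set) \<and>
             affinely_isomorphic (convex hull (phi :: (real ^ (('m \<times> 'm) \<times> ('m \<times> 'm))) set)) F"
proof -
  have "CARD('m) \<le> CARD('n)"
    using assms by simp
  then obtain h :: "'m \<Rightarrow> 'n" where h: "strict_mono h"
    using exists_strict_mono_finite by blast
  define N where "N = real (card {(i,j). i < (j :: 'n)})"
  define embed where "embed z = embed_linear h z + embed_offset h" for z
  define F where "F = convex hull phi \<inter> {x. face_normal h \<bullet> x = N}"
  have "convex hull phi \<subseteq> {x. face_normal h \<bullet> x \<le> N}"
    unfolding N_def by (intro hull_minimal phi_subset_face_normal_halfspace convex_halfspace_le)
  then have face: "F face_of convex hull phi"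
    unfolding F_def by (intro face_of_Int_supporting_hyperplane_le) auto
  have "F = convex hull (phi \<inter> F)"
    using face_of_convex_hull_eq_convex_hull_Int[OF finite_imp_compact[OF finite_phi] face] .
  also have "phi \<inter> F = embed ` phi"
    using phi_Int_face_normal_hyperplane[OF assms(1) h] hull_subset[of phi convex]
    unfolding F_def N_def embed_def by blast
  also have "convex hull (embed ` phi) = embed ` (convex hull phi)"
    unfolding embed_def using convex_hull_affine_image[OF linear_embed_linear] by metis
  finally have "bij_betw embed (convex hull phi) F"
    using inj_on_embed_linear[OF h] unfolding bij_betw_def embed_def inj_on_def by simp
  then show ?thesis
    using face linear_embed_linear unfolding affinely_isomorphic_def embed_def by blast
qed

end
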